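(* Let $f\in{\rm elh}(\mathbb{C})$ be non-polynomial and $g\in{\rm elh}(\mathbb{C})$, suppose there is $h_1\in{\rm elh}(\mathbb{C})$ with $h_1\neq g$ and $f\circ h_1=f\circ g$, and let $t(z),h(z),L(w)$ be entire functions with $f(g(z)+we^{t(z)})=f(g(z))+e^{L(w)+h(z)}\sin\pi w$ for all $(z,w)\in\mathbb{C}^2$. Then for all $(z,w)\in\mathbb{C}^2$, $$(t'(z)-h'(z))f'(g(z)+we^{t(z)})+(g'(z)+wt'(z)e^{t(z)})f''(g(z)+we^{t(z)})=0.$$
   Context: ${\rm elh}(\mathbb{C})$ denotes the set of entire functions with nowhere vanishing derivative and derivative $1$ at $0$. *)

theory Defs
  imports "HOL-Complex_Analysis.Complex_Analysis" "HOL-Computational_Algebra.Polynomial"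
begin

definition elh :: "(complex \<Rightarrow> complex) set" where
  "elh = {f. f holomorphic_on UNIV \<and> (\<forall>z. deriv f z \<noteq> 0) \<and> deriv f 0 = 1}"

definition is_polynomial_fun :: "(complex \<Rightarrow> complex) \<Rightarrow> bool" where
  "is_polynomial_fun f \<longleftrightarrow> (\<exists>p :: complex poly. \<forall>z. f z = poly p z)"

end

theory Submission
  imports Defs
begin

text \<open>Differentiating the functional equation in \<open>w\<close> gives
  \<open>f'(g z + w exp (t z)) exp (t z - h z) = (\<lambda>w. exp (L w) sin (\<pi> w))'(w)\<close>,
  which does not depend on \<open>z\<close>; the claimed identity is its \<open>z\<close>-derivative,
  divided by the nonvanishing factor \<open>exp (t z - h z)\<close>.\<close>

lemma holomorphic_on_UNIV_has_field_derivative: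
  "f holomorphic_on UNIV \<Longrightarrow> (f has_field_derivative deriv f x) (at x)"
  by (meson DERIV_deriv_iff_field_differentiable UNIV_I
      holomorphic_on_imp_differentiable_at open_UNIV)

lemma deriv_eq_of_line_restriction_eq:
  fixes f E :: "complex \<Rightarrow> complex"
  assumes "f holomorphic_on UNIV" and "E holomorphic_on UNIV"
    and "\<And>w. f (a + w * b) = c + k * E w"
  shows "deriv f (a + w * b) * b = k * deriv E w"
proof -
  have "((\<lambda>w. a + w * b) has_field_derivative b) (at w)"
    by (auto intro!: derivative_eq_intros)
  from DERIV_chain2[OF holomorphic_on_UNIV_has_field_derivative[OF assms(1)] this]
  have "((\<lambda>w. f (a + w * b)) has_field_derivative deriv f (a + w * b) * b) (at w)" .
  moreover have "((\<lambda>w. f (a + w * b)) has_field_derivative k * deriv E w) (at w)"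
    unfolding assms(3)
    using holomorphic_on_UNIV_has_field_derivative[OF assms(2)]
    by (auto intro!: derivative_eq_intros)
  ultimately show ?thesis
    using DERIV_unique by blast
qed

lemma has_field_derivative_deriv_along_moving_point:
  fixes f g t h :: "complex \<Rightarrow> complex" and w :: complex
  assumes "f holomorphic_on UNIV" and "g holomorphic_on UNIV"
    and "t holomorphic_on UNIV" and "h holomorphic_on UNIV"
  defines "X \<equiv> \<lambda>z. g z + w * exp (t z)"
  shows "((\<lambda>z. deriv f (X z) * exp (t z - h z)) has_field_derivative
      exp (t z - h z) * ((deriv t z - deriv h z) * deriv f (X z)
        + (deriv g z + w * deriv t z * exp (t z)) * deriv (deriv f) (X z))) (at z)"
proof -
  note der = holomorphic_on_UNIV_has_field_derivative
  have "(X has_field_derivative deriv g z + w * (deriv t z * exp (t z))) (at z)"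
    unfolding X_def using der[OF assms(2)] der[OF assms(3)]
    by (auto intro!: derivative_eq_intros)
  from DERIV_chain2[OF der[OF holomorphic_deriv[OF assms(1) open_UNIV]] this]
  have "((\<lambda>z. deriv f (X z)) has_field_derivative
      deriv (deriv f) (X z) * (deriv g z + w * (deriv t z * exp (t z)))) (at z)" .
  moreover have "((\<lambda>z. exp (t z - h z)) has_field_derivative
      exp (t z - h z) * (deriv t z - deriv h z)) (at z)"
    using der[OF assms(3)] der[OF assms(4)]
    by (auto intro!: derivative_eq_intros)
  ultimately show ?thesis
    by (rule DERIV_mult[THEN DERIV_cong]) (simp add: algebra_simps)
qed

theorem proposition3p32:
  fixes f g h1 t h L :: "complex \<Rightarrow> complex"
  assumes "f \<in> elh" and "\<not> is_polynomial_fun f" and "g \<in> elh"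
    and "h1 \<in> elh" and "h1 \<noteq> g" and "f \<circ> h1 = f \<circ> g"
    and "t holomorphic_on UNIV" and "h holomorphic_on UNIV" and "L holomorphic_on UNIV"
    and "\<And>z w. f (g z + w * exp (t z)) = f (g z) + exp (L w + h z) * sin (of_real pi * w)"
  shows "\<forall>z w. (deriv t z - deriv h z) * deriv f (g z + w * exp (t z))
      + (deriv g z + w * deriv t z * exp (t z)) * deriv (deriv f) (g z + w * exp (t z)) = 0"
proof (intro allI)
  fix z w
  have f: "f holomorphic_on UNIV" and g: "g holomorphic_on UNIV"
    using assms(1,3) by (simp_all add: elh_def)
  define E where "E = (\<lambda>w. exp (L w) * sin (of_real pi * w))"
  have "E holomorphic_on UNIV"
    unfolding E_def using assms(9) by (intro holomorphic_intros) auto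
  then have "deriv f (g z + w * exp (t z)) * exp (t z - h z) = deriv E w" for z
    using deriv_eq_of_line_restriction_eq[OF f, of E "g z" "exp (t z)" "f (g z)" "exp (h z)"]
    by (simp add: assms(10) E_def exp_add exp_diff mult_ac field_simps)
  then have "((\<lambda>z. deriv f (g z + w * exp (t z)) * exp (t z - h z))
      has_field_derivative 0) (at z)"
    by simp
  with has_field_derivative_deriv_along_moving_point[OF f g assms(7,8)]
  show "(deriv t z - deriv h z) * deriv f (g z + w * exp (t z))
      + (deriv g z + w * deriv t z * exp (t z)) * deriv (deriv f) (g z + w * exp (t z)) = 0"
    using DERIV_unique by fastforce
qed

end
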